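(* In the two-SP bandwidth game with minimum small-cell bandwidth constraints, suppose both constraints are violated by the unconstrained equilibrium, i.e. $B_{1,S}^{\mathrm{free}}<B_{1,S}^0$ and $B_{2,S}^{\mathrm{free}}<B_{2,S}^0$. Then the unique constrained Nash equilibrium $(B_{1,S}^*,B_{2,S}^* )$ is of one of the following types: (I) $B_{1,S}^*=B_{1,S}^0$ and $B_{2,S}^*=B_{2,S}^0$; or (II) exactly one SP sits at its lower bound and the other strictly exceeds it, i.e. $B_{1,S}^*=B_{1,S}^0,\ B_{2,S}^*>B_{2,S}^0$ or $B_{1,S}^*>B_{1,S}^0,\ B_{2,S}^*=B_{2,S}^0$. In particular, it is never the case that both $B_{1,S}^*>B_{1,S}^0$ and $B_{2,S}^*>B_{2,S}^0$.
   Context: Fixed parameters: $\alpha\in(0,1)$; densities $N_m>0$ (mobile users) and $N_f>0$ (fixed users); spectral efficiency $R_0>0$; common small-cell density $\lambda_S>1$ (macro density normalized to 1); total bandwidths $B_1,B_2>0$; regulatory lower bounds $B_{i,S}^0\in[0,B_i]$. Utility $u(r)=\frac{r^{1-\alpha}}{1-\alpha}$, $u'(r)=r^{-\alpha}$. Let $\epsilon=\lambda_S^{1/\alpha-1}$. Two-SP bandwidth game: SP $i\in\{1,2\}$ chooses small-cell bandwidth $B_{i,S}\in[B_{i,S}^0,B_i]$ and sets $B_{i,M}=B_i-B_{i,S}$. Given a profile, prices are market-clearing, mobile users use macro-cells and fixed users use small-cells, so the average rates are $R_S=\frac{\lambda_S(B_{1,S}+B_{2,S})R_0}{N_f}$ and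 $R_M=\frac{(B_{1,M}+B_{2,M})R_0}{N_m}$, and SP $i$'s payoff (revenue) is $S_i=R_0B_{i,M}R_M^{-\alpha}+R_0\lambda_SB_{i,S}R_S^{-\alpha}$ (a term with zero bandwidth is $0$). This game has a unique pure Nash equilibrium. Define $B_{i,S}^{\mathrm{free}}=\frac{\epsilon N_fB_i}{\epsilon N_f+N_m}$, the equilibrium small-cell bandwidth of SP $i$ when there are no constraints ($B_{i,S}^0=0$). *)

theory Defs
  imports Complex_Main
begin

definition zterm :: "real \<Rightarrow> real \<Rightarrow> real \<Rightarrow> real" where
  "zterm \<alpha> B R = (if B = 0 then 0 else B * R powr (- \<alpha>))"

definition rate_S :: "real \<Rightarrow> real \<Rightarrow> real \<Rightarrow> real \<Rightarrow> real \<Rightarrow> real" where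
  "rate_S lamS R0 Nf b1S b2S = lamS * (b1S + b2S) * R0 / Nf"

definition rate_M :: "real \<Rightarrow> real \<Rightarrow> real \<Rightarrow> real \<Rightarrow> real" where
  "rate_M R0 Nm b1M b2M = (b1M + b2M) * R0 / Nm"

definition payoff :: "real \<Rightarrow> real \<Rightarrow> real \<Rightarrow> real \<Rightarrow> real \<Rightarrow> real \<Rightarrow> real \<Rightarrow> real \<Rightarrow> real \<Rightarrow> real" where
  "payoff \<alpha> R0 lamS Nm Nf Bi Bj biS bjS =
     R0 * zterm \<alpha> (Bi - biS) (rate_M R0 Nm (Bi - biS) (Bj - bjS))
     + R0 * lamS * zterm \<alpha> biS (rate_S lamS R0 Nf biS bjS)"

definition is_NE :: "real \<Rightarrow> real \<Rightarrow> real \<Rightarrow> real \<Rightarrow> real \<Rightarrow> real \<Rightarrow> real \<Rightarrow> real \<Rightarrow> real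
    \<Rightarrow> real \<Rightarrow> real \<Rightarrow> bool" where
  "is_NE \<alpha> R0 lamS Nm Nf B1 B2 B10 B20 x1 x2 \<longleftrightarrow>
     x1 \<in> {B10..B1} \<and> x2 \<in> {B20..B2} \<and>
     (\<forall>y\<in>{B10..B1}. payoff \<alpha> R0 lamS Nm Nf B1 B2 y x2 \<le> payoff \<alpha> R0 lamS Nm Nf B1 B2 x1 x2) \<and>
     (\<forall>y\<in>{B20..B2}. payoff \<alpha> R0 lamS Nm Nf B2 B1 y x1 \<le> payoff \<alpha> R0 lamS Nm Nf B2 B1 x2 x1)"

definition B_free :: "real \<Rightarrow> real \<Rightarrow> real \<Rightarrow> real \<Rightarrow> real \<Rightarrow> real" where
  "B_free \<alpha> lamS Nm Nf Bi =
     (let \<epsilon> = lamS powr (1 / \<alpha> - 1) in \<epsilon> * Nf * Bi / (\<epsilon> * Nf + Nm))"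

end

theory Submission imports Defs begin

text \<open>Suppose both SPs strictly exceed their lower bounds. If both put all their bandwidth
  into small cells, either can profitably move a little back to the empty macro tier, whose
  marginal revenue is unbounded. Otherwise both best responses satisfy the first-order
  condition "marginal payoff \<ge> 0". The two marginal payoffs share the same prices and add up
  to \<open>R0 (2 - \<alpha>) (\<lambda>\<^sub>S R\<^sub>S\<^sup>-\<^sup>\<alpha> - R\<^sub>M\<^sup>-\<^sup>\<alpha>)\<close>, so the total small-cell bandwidth is at most the
  unconstrained share \<open>\<epsilon> N\<^sub>f / (\<epsilon> N\<^sub>f + N\<^sub>m)\<close> of the total. But each SP exceeds its
  unconstrained share, a contradiction.\<close>

lemma zterm_eq: "zterm \<alpha> B R = B * R powr (-\<alpha>)"
  by (simp add: zterm_def)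

lemma DERIV_nonneg_at_left_max:
  fixes f :: "real \<Rightarrow> real"
  assumes "DERIV f x :> D" "a < x" "\<forall>y\<in>{a..x}. f y \<le> f x"
  shows "0 \<le> D"
proof (rule ccontr)
  assume "\<not> 0 \<le> D"
  then obtain d where d: "d > 0" "\<And>h. 0 < h \<Longrightarrow> h < d \<Longrightarrow> f x < f (x - h)"
    using DERIV_neg_dec_left[OF assms(1)] by force
  define h where "h = min d (x - a) / 2"
  have "0 < h" "h < d" "h \<le> x - a"
    using d \<open>a < x\<close> by (auto simp: h_def)
  then have "f x < f (x - h)" "f (x - h) \<le> f x"
    using d(2) assms(3) by auto
  then show False
    by simp
qed

definition marginal_payoff ::
    "real \<Rightarrow> real \<Rightarrow> real \<Rightarrow> real \<Rightarrow> real \<Rightarrow> real \<Rightarrow> real \<Rightarrow> real \<Rightarrow> real \<Rightarrow> real" where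
  "marginal_payoff \<alpha> R0 lamS Nm Nf Bi Bj biS bjS =
     R0 * lamS * rate_S lamS R0 Nf biS bjS powr (-\<alpha>) * (1 - \<alpha> * biS / (biS + bjS))
     - R0 * rate_M R0 Nm (Bi - biS) (Bj - bjS) powr (-\<alpha>)
         * (1 - \<alpha> * (Bi - biS) / (Bi - biS + (Bj - bjS)))"

lemma DERIV_payoff:
  fixes \<alpha> R0 lamS Nm Nf Bi Bj biS bjS :: real
  assumes "Nm > 0" "Nf > 0" "R0 > 0" "lamS > 0"
    and "biS + bjS > 0" "Bi - biS + (Bj - bjS) > 0"
  shows "DERIV (\<lambda>y. payoff \<alpha> R0 lamS Nm Nf Bi Bj y bjS) biS
           :> marginal_payoff \<alpha> R0 lamS Nm Nf Bi Bj biS bjS"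
proof -
  define M where "M = Bi - biS + (Bj - bjS)"
  define S where "S = biS + bjS"
  define g where "g y = (Bi - y + (Bj - bjS)) * R0 / Nm" for y
  define h where "h y = lamS * (y + bjS) * R0 / Nf" for y
  have "M > 0" "S > 0"
    using assms by (simp_all add: M_def S_def)
  have g: "g biS = M * R0 / Nm" "g biS > 0" and h: "h biS = lamS * S * R0 / Nf" "h biS > 0"
    using assms by (simp_all add: g_def h_def M_def S_def)
  have payoff_eq: "payoff \<alpha> R0 lamS Nm Nf Bi Bj y bjS
      = R0 * ((Bi - y) * g y powr (-\<alpha>)) + R0 * lamS * (y * h y powr (-\<alpha>))" for y
    by (simp add: payoff_def zterm_eq rate_M_def rate_S_def g_def h_def mult.assoc)
  have "DERIV (\<lambda>y. payoff \<alpha> R0 lamS Nm Nf Bi Bj y bjS) biS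
      :> R0 * (- (g biS powr (-\<alpha>)) + (Bi - biS) * (-\<alpha> * g biS powr (-\<alpha> - 1) * (- R0 / Nm)))
         + R0 * lamS * (h biS powr (-\<alpha>) + biS * (-\<alpha> * h biS powr (-\<alpha> - 1) * (lamS * R0 / Nf)))"
    unfolding payoff_eq using g h unfolding g_def h_def
    by (auto intro!: derivative_eq_intros simp: field_simps)
  moreover have "g biS powr (-\<alpha> - 1) = g biS powr (-\<alpha>) / g biS"
    "h biS powr (-\<alpha> - 1) = h biS powr (-\<alpha>) / h biS"
    using g(2) h(2) by (simp_all add: powr_diff)
  ultimately have deriv: "DERIV (\<lambda>y. payoff \<alpha> R0 lamS Nm Nf Bi Bj y bjS) biS
      :> R0 * (- (g biS powr (-\<alpha>)) + (Bi - biS) * (-\<alpha> * (g biS powr (-\<alpha>) / g biS) * (- R0 / Nm)))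
         + R0 * lamS * (h biS powr (-\<alpha>) + biS * (-\<alpha> * (h biS powr (-\<alpha>) / h biS) * (lamS * R0 / Nf)))"
    by simp
  have alg: "R0 * (- Q + (Bi - biS) * (-\<alpha> * (Q / (M * R0 / Nm)) * (- R0 / Nm)))
      + R0 * lamS * (P + biS * (-\<alpha> * (P / (lamS * S * R0 / Nf)) * (lamS * R0 / Nf)))
      = R0 * lamS * P * (1 - \<alpha> * biS / S) - R0 * Q * (1 - \<alpha> * (Bi - biS) / M)" for P Q
    using \<open>M > 0\<close> \<open>S > 0\<close> assms by (simp add: field_simps)
  have marg: "marginal_payoff \<alpha> R0 lamS Nm Nf Bi Bj biS bjS
      = R0 * lamS * (lamS * S * R0 / Nf) powr (-\<alpha>) * (1 - \<alpha> * biS / S)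
        - R0 * (M * R0 / Nm) powr (-\<alpha>) * (1 - \<alpha> * (Bi - biS) / M)"
    by (simp add: marginal_payoff_def rate_M_def rate_S_def M_def S_def)
  have "R0 * (- (g biS powr (-\<alpha>)) + (Bi - biS) * (-\<alpha> * (g biS powr (-\<alpha>) / g biS) * (- R0 / Nm)))
      + R0 * lamS * (h biS powr (-\<alpha>) + biS * (-\<alpha> * (h biS powr (-\<alpha>) / h biS) * (lamS * R0 / Nf)))
      = marginal_payoff \<alpha> R0 lamS Nm Nf Bi Bj biS bjS"
    unfolding g(1) h(1) marg by (rule alg)
  with deriv show ?thesis
    by simp
qed

lemma marginal_payoff_nonneg_at_best_response:
  fixes \<alpha> R0 lamS Nm Nf Bi Bj Bi0 biS bjS :: real
  assumes "Nm > 0" "Nf > 0" "R0 > 0" "lamS > 0"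
    and "biS + bjS > 0" "Bi - biS + (Bj - bjS) > 0" "Bi0 < biS" "biS \<le> Bi"
    and "\<forall>y\<in>{Bi0..Bi}. payoff \<alpha> R0 lamS Nm Nf Bi Bj y bjS \<le> payoff \<alpha> R0 lamS Nm Nf Bi Bj biS bjS"
  shows "0 \<le> marginal_payoff \<alpha> R0 lamS Nm Nf Bi Bj biS bjS"
  using assms by (intro DERIV_nonneg_at_left_max[OF DERIV_payoff]) auto

text \<open>The prices do not depend on who owns the bandwidth, so the terms \<open>1 - \<alpha> b / S\<close> and
  \<open>1 - \<alpha> b / M\<close> of the two SPs add up to \<open>2 - \<alpha>\<close> each.\<close>

lemma marginal_payoff_sum:
  fixes \<alpha> R0 lamS Nm Nf Bi Bj biS bjS :: real
  assumes "biS + bjS \<noteq> 0" "Bi - biS + (Bj - bjS) \<noteq> 0"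
  shows "marginal_payoff \<alpha> R0 lamS Nm Nf Bi Bj biS bjS + marginal_payoff \<alpha> R0 lamS Nm Nf Bj Bi bjS biS
       = R0 * (2 - \<alpha>) * (lamS * rate_S lamS R0 Nf biS bjS powr (-\<alpha>)
                          - rate_M R0 Nm (Bi - biS) (Bj - bjS) powr (-\<alpha>))"
proof -
  define P where "P = rate_S lamS R0 Nf biS bjS powr (-\<alpha>)"
  define Q where "Q = rate_M R0 Nm (Bi - biS) (Bj - bjS) powr (-\<alpha>)"
  have rates: "rate_S lamS R0 Nf bjS biS = rate_S lamS R0 Nf biS bjS"
    "rate_M R0 Nm (Bj - bjS) (Bi - biS) = rate_M R0 Nm (Bi - biS) (Bj - bjS)"
    by (simp_all add: rate_S_def rate_M_def add.commute)
  have share: "(1 - \<alpha> * x / (x + y)) + (1 - \<alpha> * y / (y + x)) = 2 - \<alpha>"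
    if "x + y \<noteq> 0" for x y :: real
  proof -
    have "\<alpha> * x / (x + y) + \<alpha> * y / (x + y) = \<alpha>"
      using that by (simp flip: add_divide_distrib distrib_left)
    then show ?thesis
      by (simp add: add.commute)
  qed
  have "marginal_payoff \<alpha> R0 lamS Nm Nf Bi Bj biS bjS + marginal_payoff \<alpha> R0 lamS Nm Nf Bj Bi bjS biS
      = R0 * lamS * P * ((1 - \<alpha> * biS / (biS + bjS)) + (1 - \<alpha> * bjS / (bjS + biS)))
        - R0 * Q * ((1 - \<alpha> * (Bi - biS) / (Bi - biS + (Bj - bjS)))
                    + (1 - \<alpha> * (Bj - bjS) / (Bj - bjS + (Bi - biS))))"
    unfolding marginal_payoff_def P_def Q_def rates by (simp only: algebra_simps)
  also have "\<dots> = R0 * (2 - \<alpha>) * (lamS * P - Q)"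
    unfolding share[OF assms(1)] share[OF assms(2)] by (simp add: algebra_simps)
  finally show ?thesis
    by (simp add: P_def Q_def)
qed

text \<open>With no macro bandwidth left, moving \<open>t\<close> back to the macro tier earns about
  \<open>R0 t (t R0 / N\<^sub>m)\<^sup>-\<^sup>\<alpha>\<close>, which for small \<open>t\<close> beats the small-cell revenue \<open>R0 \<lambda>\<^sub>S t R\<^sub>S\<^sup>-\<^sup>\<alpha>\<close> lost.\<close>

lemma full_small_cell_not_best_response:
  fixes \<alpha> R0 lamS Nm Nf Bi Bj Bi0 :: real
  assumes "0 < \<alpha>" "Nm > 0" "Nf > 0" "R0 > 0" "lamS > 0"
    and "Bi0 < Bi" "0 \<le> Bi0" "0 \<le> Bj"
  obtains y where "y \<in> {Bi0..Bi}"
    "payoff \<alpha> R0 lamS Nm Nf Bi Bj Bi Bj < payoff \<alpha> R0 lamS Nm Nf Bi Bj y Bj"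
proof -
  define P where "P = (lamS * (Bi + Bj) * R0 / Nf) powr (-\<alpha>)"
  have "P > 0"
    using assms by (simp add: P_def)
  define w where "w = (lamS * P) powr (-1 / \<alpha>)"
  have w: "w > 0" "w powr (-\<alpha>) = lamS * P"
    using \<open>P > 0\<close> assms by (simp_all add: w_def powr_powr)
  define t where "t = min ((Bi - Bi0) / 2) (Nm / R0 * w / 2)"
  have "t \<le> (Bi - Bi0) / 2" "t \<le> Nm / R0 * w / 2"
    unfolding t_def by (rule min.cobounded1, rule min.cobounded2)
  moreover have "0 < t"
    using assms w by (simp add: t_def)
  ultimately have "t * R0 / Nm \<le> w / 2" and t: "0 < t" "t < Bi - Bi0"
    using assms by (simp_all add: field_simps)
  then have tw: "t * R0 / Nm < w"
    using w by linarith
  have macro_gain: "lamS * P < (t * R0 / Nm) powr (-\<alpha>)"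
    using powr_less_mono2_neg[of "-\<alpha>" "t * R0 / Nm" w] tw t w assms by simp
  have small_price: "P \<le> (lamS * (Bi - t + Bj) * R0 / Nf) powr (-\<alpha>)"
    unfolding P_def using assms t
    by (intro powr_mono2' divide_right_mono mult_right_mono mult_left_mono) auto
  have "payoff \<alpha> R0 lamS Nm Nf Bi Bj Bi Bj = R0 * (t * (lamS * P)) + R0 * lamS * ((Bi - t) * P)"
    by (simp add: payoff_def zterm_eq rate_M_def rate_S_def P_def algebra_simps)
  also have "\<dots> < R0 * (t * (t * R0 / Nm) powr (-\<alpha>))
      + R0 * lamS * ((Bi - t) * (lamS * (Bi - t + Bj) * R0 / Nf) powr (-\<alpha>))"
    using macro_gain small_price t assms
    by (intro add_less_le_mono mult_strict_left_mono mult_left_mono) auto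
  also have "\<dots> = payoff \<alpha> R0 lamS Nm Nf Bi Bj (Bi - t) Bj"
    by (simp add: payoff_def zterm_eq rate_M_def rate_S_def mult.assoc)
  finally show ?thesis
    using t by (intro that[of "Bi - t"]) auto
qed

lemma powr_neg_le_mult_imp:
  fixes u v c \<alpha> :: real
  assumes "0 < \<alpha>" "0 < u" "0 < v" "0 < c" "v powr (-\<alpha>) \<le> c * u powr (-\<alpha>)"
  shows "c powr (-1 / \<alpha>) * u \<le> v"
proof -
  have "(c * u powr (-\<alpha>)) powr (-1 / \<alpha>) \<le> (v powr (-\<alpha>)) powr (-1 / \<alpha>)"
    using assms by (intro powr_mono2') auto
  then show ?thesis
    using assms by (simp add: powr_powr powr_mult)
qed

lemma small_cell_share_le_of_prices:
  fixes \<alpha> R0 lamS Nm Nf S M :: real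
  assumes "0 < \<alpha>" "Nm > 0" "Nf > 0" "R0 > 0" "lamS > 0" "S > 0" "M > 0"
    and "(M * R0 / Nm) powr (-\<alpha>) \<le> lamS * (lamS * S * R0 / Nf) powr (-\<alpha>)"
  shows "S * Nm \<le> lamS powr (1 / \<alpha> - 1) * Nf * M"
proof -
  define e where "e = lamS powr (1 / \<alpha> - 1)"
  have "e > 0"
    using \<open>lamS > 0\<close> by (simp add: e_def)
  have "lamS powr (-1 / \<alpha>) * lamS = 1 / e"
    using assms by (simp add: e_def powr_diff powr_minus divide_inverse)
  then have "lamS powr (-1 / \<alpha>) * (lamS * S * R0 / Nf) = S * R0 / (Nf * e)"
    by (simp add: field_simps)
  then have "S * R0 / (Nf * e) \<le> M * R0 / Nm"
    using powr_neg_le_mult_imp[of \<alpha> "lamS * S * R0 / Nf" "M * R0 / Nm" lamS] assms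
    by simp
  then show ?thesis
    unfolding e_def[symmetric] using assms \<open>e > 0\<close> by (simp add: field_simps)
qed

lemma interior_NE_small_cell_share_le:
  fixes \<alpha> R0 lamS Nm Nf B1 B2 B10 B20 x1 x2 :: real
  assumes "0 < \<alpha>" "\<alpha> < 1" "Nm > 0" "Nf > 0" "R0 > 0" "lamS > 0" "0 \<le> B10" "0 \<le> B20"
    and NE: "is_NE \<alpha> R0 lamS Nm Nf B1 B2 B10 B20 x1 x2" and "B10 < x1" "B20 < x2"
  shows "(x1 + x2) * Nm \<le> lamS powr (1 / \<alpha> - 1) * Nf * (B1 - x1 + (B2 - x2))"
proof -
  define M where "M = B1 - x1 + (B2 - x2)"
  define S where "S = x1 + x2"
  have "S > 0"
    using assms by (simp add: S_def)
  have "M > 0"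
  proof (rule ccontr)
    assume "\<not> M > 0"
    then have full: "x1 = B1" "x2 = B2"
      using NE by (auto simp: M_def is_NE_def)
    obtain y where "y \<in> {B10..B1}"
      "payoff \<alpha> R0 lamS Nm Nf B1 B2 B1 B2 < payoff \<alpha> R0 lamS Nm Nf B1 B2 y B2"
      using full_small_cell_not_best_response[of \<alpha> Nm Nf R0 lamS B10 B1 B2] full NE assms
      by (auto simp: is_NE_def)
    with full NE show False
      by (metis is_NE_def not_le)
  qed
  have "0 \<le> marginal_payoff \<alpha> R0 lamS Nm Nf B1 B2 x1 x2 + marginal_payoff \<alpha> R0 lamS Nm Nf B2 B1 x2 x1"
    using \<open>S > 0\<close> \<open>M > 0\<close> NE assms unfolding S_def M_def is_NE_def
    by (intro add_nonneg_nonneg marginal_payoff_nonneg_at_best_response) (auto simp: algebra_simps)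
  then have "0 \<le> R0 * (2 - \<alpha>) * (lamS * (lamS * S * R0 / Nf) powr (-\<alpha>) - (M * R0 / Nm) powr (-\<alpha>))"
    using \<open>S > 0\<close> \<open>M > 0\<close> by (simp add: marginal_payoff_sum S_def M_def rate_S_def rate_M_def)
  moreover have "R0 * (2 - \<alpha>) > 0"
    using \<open>R0 > 0\<close> \<open>\<alpha> < 1\<close> by simp
  ultimately have "(M * R0 / Nm) powr (-\<alpha>) \<le> lamS * (lamS * S * R0 / Nf) powr (-\<alpha>)"
    by (simp add: zero_le_mult_iff)
  then show ?thesis
    unfolding S_def[symmetric] M_def[symmetric]
    by (intro small_cell_share_le_of_prices) (use assms \<open>S > 0\<close> \<open>M > 0\<close> in auto)
qed

lemma B_free_less_imp:
  fixes \<alpha> lamS Nm Nf Bi biS :: real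
  assumes "Nm > 0" "Nf > 0" "lamS > 0" "B_free \<alpha> lamS Nm Nf Bi < biS"
  shows "lamS powr (1 / \<alpha> - 1) * Nf * (Bi - biS) < biS * Nm"
proof -
  have "0 < lamS powr (1 / \<alpha> - 1) * Nf + Nm"
    using assms by (simp add: add_pos_pos)
  then show ?thesis
    using assms(4) by (simp add: B_free_def Let_def pos_divide_less_eq algebra_simps)
qed

theorem proposition1:
  fixes \<alpha> Nm Nf R0 lamS B1 B2 B10 B20 x1 x2 :: real
  assumes "0 < \<alpha>" "\<alpha> < 1" "Nm > 0" "Nf > 0" "R0 > 0" "lamS > 1"
    and "B1 > 0" "B2 > 0"
    and "0 \<le> B10" "B10 \<le> B1" "0 \<le> B20" "B20 \<le> B2"
    and "B_free \<alpha> lamS Nm Nf B1 < B10" "B_free \<alpha> lamS Nm Nf B2 < B20"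
    and "is_NE \<alpha> R0 lamS Nm Nf B1 B2 B10 B20 x1 x2"
  shows "(x1 = B10 \<and> x2 = B20) \<or> (x1 = B10 \<and> x2 > B20) \<or> (x1 > B10 \<and> x2 = B20)"
proof (rule ccontr)
  assume "\<not> ?thesis"
  with assms(15) have "B10 < x1" "B20 < x2"
    by (auto simp: is_NE_def)
  then have "(x1 + x2) * Nm \<le> lamS powr (1 / \<alpha> - 1) * Nf * (B1 - x1 + (B2 - x2))"
    using interior_NE_small_cell_share_le assms by simp
  moreover have "lamS powr (1 / \<alpha> - 1) * Nf * (B1 - x1 + (B2 - x2)) < (x1 + x2) * Nm"
    using B_free_less_imp[of Nm Nf lamS \<alpha> B1 x1] B_free_less_imp[of Nm Nf lamS \<alpha> B2 x2]
      \<open>B10 < x1\<close> \<open>B20 < x2\<close> assms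
    by (simp add: algebra_simps)
  ultimately show False
    by simp
qed

end
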